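(* Let $(X,Y)$ and $(X',Y')$ be i.i.d. copies, with $X$ taking values in some feature space and $Y$ real-valued with continuous distribution function $F_Y$ and $\mathbb{E}|Y|<\infty$. Let $g$ be a real-valued score function such that $g(X)$ has a continuous distribution function $F_{g(X)}$ (so $\mathbb{P}(g(X)=g(X'))=0$). For a nonnegative symmetric weight function $w$, define \[ \mathcal{L}(g)=\mathbb{E}\!\left[w(Y,Y')\,\mathbbm{1}\!\left\{(Y-Y')\,\operatorname{sign}\big(g(X)-g(X')\big)\le 0\right\}\right]. \] Then: 1. (Kendall's $\tau$.) If $w\equiv 1$, then $\mathcal{L}(g)=\mathcal{L}_{\mathrm{uni}}(Y,g(X))=\tfrac12\big(1-\tau(Y,g(X))\big)$, where $\tau(Y,g(X))=\mathbb{E}[\operatorname{sign}(Y-Y')\operatorname{sign}(g(X)-g(X'))]$; hence minimizing $\mathcal{L}$ over $g$ is equivalent to minimizing $\mathcal{L}_{\mathrm{uni}}$. 2. (Gini covariance.) If $w(Y,Y')=|Y-Y'|$, then $\mathcal{L}(g)=\mathcal{L}_{\mathrm{abs}}(Y,g(X))=c-2\operatorname{Cov}\big(Y,F_{g(X)}(g(X))\big)$ with $c=\tfrac12\mathbb{E}|Y-Y'|$, a constant not depending on $g$; hence minimizing $\mathcal{L}$ over $g$ is equivalent to minimizing $\mathcal{L}_{\mathrm{abs}}$. 3. (Spearman's $\rho$.) If $w(Y,Y')=|F_Y(Y)-F_Y(Y')|$, then $\mathcal{L}(g)=\mathcal{L}_{\mathrm{cdf}}(Y,g(X))=\tfrac16\big(1-\rho_S(Y,g(X))\big)$,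 where $\rho_S(Y,g(X))=12\operatorname{Cov}\big(F_Y(Y),F_{g(X)}(g(X))\big)$; hence minimizing $\mathcal{L}$ over $g$ is equivalent to minimizing $\mathcal{L}_{\mathrm{cdf}}$.
   Context: $\operatorname{sign}(t)=\mathbbm{1}\{t>0\}-\mathbbm{1}\{t<0\}$. $F_{g(X)}$ denotes the cumulative distribution function of the random variable $g(X)$, and $F_Y$ that of $Y$. *)

theory Defs
  imports "HOL-Probability.Probability"
begin

text \<open>The joint law of (X,Y) is a probability measure P on S \<Otimes> borel (S the feature space).
  An i.i.d. copy (X',Y') is modelled by the product measure P \<Otimes> P; a point of the product
  is ((x,y),(x',y')).\<close>

definition cdf_of :: "'s measure \<Rightarrow> ('s \<Rightarrow> real) \<Rightarrow> real \<Rightarrow> real" where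
  "cdf_of P h t = measure P {z \<in> space P. h z \<le> t}"

definition cov_of :: "'s measure \<Rightarrow> ('s \<Rightarrow> real) \<Rightarrow> ('s \<Rightarrow> real) \<Rightarrow> real" where
  "cov_of P f h = (\<integral>z. f z * h z \<partial>P) - (\<integral>z. f z \<partial>P) * (\<integral>z. h z \<partial>P)"

definition rank_loss :: "('x \<times> real) measure \<Rightarrow> (real \<Rightarrow> real \<Rightarrow> real) \<Rightarrow> ('x \<Rightarrow> real) \<Rightarrow> real" where
  "rank_loss P w g =
     (\<integral>p. w (snd (fst p)) (snd (snd p)) *
         indicator {p. (snd (fst p) - snd (snd p)) * sgn (g (fst (fst p)) - g (fst (snd p))) \<le> 0} p
       \<partial>(P \<Otimes>\<^sub>M P))"

definition kendall_tau :: "('x \<times> real) measure \<Rightarrow> ('x \<Rightarrow> real) \<Rightarrow> real" where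
  "kendall_tau P g =
     (\<integral>p. sgn (snd (fst p) - snd (snd p)) * sgn (g (fst (fst p)) - g (fst (snd p))) \<partial>(P \<Otimes>\<^sub>M P))"

definition spearman_rho :: "('x \<times> real) measure \<Rightarrow> ('x \<Rightarrow> real) \<Rightarrow> real" where
  "spearman_rho P g =
     12 * cov_of P (\<lambda>z. cdf_of P snd (snd z)) (\<lambda>z. cdf_of P (\<lambda>u. g (fst u)) (g (fst z)))"

end

theory Submission
  imports Defs
begin

(* Write s = sgn (g X - g X'). As g X has no atoms, s = 1 or s = -1 almost surely, and then
   |a - a'| 1{(a - a') s \<le> 0} = (|a - a'| - (a - a') s) / 2 for all reals a, a'.
   Integrating s over the second copy gives 2 F(g X) - 1, and swapping the copies flips s, so
   E[(a(Z) - a(Z')) s] = 4 Cov(a(Z), F(g X)), where F(g X) is uniform on [0,1] and has mean 1/2.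
   Taking a = Y gives the Gini form. For w = 1, the pointwise identity with |Y - Y'| replaced
   by 1 (Y has no atoms either) gives Kendall's tau. For w = |F_Y(Y) - F_Y(Y')|, monotonicity
   of F_Y lets U = F_Y(Y) replace Y in the indicator, and E|U - U'| = 4 Var U = 1/3. *)

lemma continuous_mono_sublevel_eq_atMost:
  fixes F :: "real \<Rightarrow> real"
  assumes cont: "continuous_on UNIV F" and "mono F"
    and nonempty: "{u. F u \<le> t} \<noteq> {}" and above: "\<forall>\<^sub>F u in at_top. t < F u"
  obtains s where "F s = t" "{u. F u \<le> t} = {..s}"
proof -
  let ?S = "{u. F u \<le> t}"
  obtain N where N: "\<And>u. u \<ge> N \<Longrightarrow> t < F u"
    using above by (auto simp: eventually_at_top_linorder)
  have "?S \<subseteq> {..N}"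
  proof
    fix u
    assume "u \<in> ?S"
    then show "u \<in> {..N}"
      using N[of u] by (cases "N \<le> u") auto
  qed
  then have bdd: "bdd_above ?S"
    by (rule bdd_above_mono[OF bdd_above_Iic])
  have "closed ?S"
    using cont by (intro closed_Collect_le) (auto intro: continuous_intros)
  then have "Sup ?S \<in> ?S"
    using nonempty bdd by (intro closed_contains_Sup)
  then have le: "F (Sup ?S) \<le> t" by simp
  have ge: "t \<le> F (Sup ?S)"
  proof (rule ccontr)
    assume "\<not> t \<le> F (Sup ?S)"
    then have "Sup ?S \<in> {u. F u < t}" by simp
    moreover have "open {u. F u < t}"
      using cont by (intro open_Collect_less) (auto intro: continuous_intros)
    ultimately obtain e where "e > 0" "ball (Sup ?S) e \<subseteq> {u. F u < t}"
      by (meson openE)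
    then have "Sup ?S + e/2 \<in> ?S"
      by (auto simp: dist_real_def subset_eq intro!: less_imp_le)
    then have "Sup ?S + e/2 \<le> Sup ?S"
      using bdd by (rule cSup_upper)
    with \<open>e > 0\<close> show False by simp
  qed
  have "?S = {..Sup ?S}"
  proof (intro equalityI subsetI)
    fix u
    assume "u \<in> ?S"
    then show "u \<in> {..Sup ?S}"
      using bdd by (simp add: cSup_upper)
  next
    fix u
    assume "u \<in> {..Sup ?S}"
    then have "F u \<le> F (Sup ?S)"
      using \<open>mono F\<close> by (simp add: monoD)
    with le show "u \<in> ?S" by simp
  qed
  with le ge show thesis
    by (intro that) auto
qed

lemma abs_mult_of_bool_discordant:
  fixes d s :: real
  assumes "\<bar>s\<bar> = 1"
  shows "\<bar>d\<bar> * of_bool (d * s \<le> 0) = (\<bar>d\<bar> - d * s) / 2"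
  using assms by (cases "d \<ge> 0"; cases "s \<ge> 0") (auto simp: abs_if)

lemma of_bool_discordant_eq_sgn:
  fixes d s :: real
  assumes "d \<noteq> 0" "\<bar>s\<bar> = 1"
  shows "of_bool (d * s \<le> 0) = (1 - sgn d * s) / 2"
proof -
  have "s = 1 \<or> s = -1"
    using assms(2) by (auto simp: abs_if split: if_splits)
  with \<open>d \<noteq> 0\<close> show ?thesis
    by (auto simp: sgn_if mult_le_0_iff)
qed

lemma abs_mult_of_bool_discordant_mono:
  fixes F :: "real \<Rightarrow> real"
  assumes "mono F"
  shows "\<bar>F y - F y'\<bar> * of_bool ((y - y') * s \<le> 0)
    = \<bar>F y - F y'\<bar> * of_bool ((F y - F y') * s \<le> 0)"
proof -
  have less_if_less: "y' < y" if "F y' < F y" for y y'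
    using that monoD[OF assms, of y y'] by (cases "y \<le> y'") auto
  consider "F y = F y'" | "F y' < F y" | "F y < F y'"
    by linarith
  then show ?thesis
  proof cases
    case 2
    with less_if_less[of y' y] show ?thesis by (auto simp: mult_le_0_iff)
  next
    case 3
    with less_if_less[of y y'] show ?thesis by (auto simp: mult_le_0_iff)
  qed simp
qed

lemma abs_diff_mono_eq_mult_sgn:
  fixes F :: "real \<Rightarrow> real"
  assumes "mono F"
  shows "\<bar>F x - F y\<bar> = (F x - F y) * sgn (x - y)"
  using monoD[OF assms, of x y] monoD[OF assms, of y x]
  by (cases x y rule: linorder_cases) auto

context prob_space
begin

lemma cdf_of_eq_cdf_distr:
  assumes [measurable]: "h \<in> borel_measurable M"
  shows "cdf_of M h = cdf (distr M borel h)"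
  by (auto simp: fun_eq_iff cdf_def cdf_of_def measure_distr intro!: arg_cong[where f=prob])

lemma
  assumes [measurable]: "h \<in> borel_measurable M"
  shows mono_cdf_of: "mono (cdf_of M h)"
    and cdf_of_nonneg: "0 \<le> cdf_of M h t"
    and cdf_of_le_one: "cdf_of M h t \<le> 1"
    and tendsto_cdf_of_at_top: "(cdf_of M h \<longlongrightarrow> 1) at_top"
    and tendsto_cdf_of_at_bot: "(cdf_of M h \<longlongrightarrow> 0) at_bot"
proof -
  interpret D: real_distribution "distr M borel h" by simp
  show "mono (cdf_of M h)" "0 \<le> cdf_of M h t" "cdf_of M h t \<le> 1"
    "(cdf_of M h \<longlongrightarrow> 1) at_top" "(cdf_of M h \<longlongrightarrow> 0) at_bot"
    unfolding cdf_of_eq_cdf_distr[OF assms]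
    using D.cdf_nondecreasing D.cdf_nonneg D.cdf_bounded_prob D.cdf_lim_at_top_prob D.cdf_lim_at_bot
    by (auto intro: monoI)
qed

lemma borel_measurable_cdf_of[measurable]:
  "h \<in> borel_measurable M \<Longrightarrow> cdf_of M h \<in> borel_measurable borel"
  by (rule borel_measurable_mono[OF mono_cdf_of])

lemma integrable_cdf_of_comp:
  assumes [measurable]: "h \<in> borel_measurable M" "f \<in> borel_measurable M"
  shows "integrable M (\<lambda>z. cdf_of M h (f z))"
  by (auto intro!: integrable_const_bound[where B=1] simp: cdf_of_nonneg cdf_of_le_one)

lemma AE_neq_continuous_cdf_of:
  assumes [measurable]: "h \<in> borel_measurable M" and cont: "continuous_on UNIV (cdf_of M h)"
  shows "AE z in M. h z \<noteq> t"
proof -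
  interpret D: real_distribution "distr M borel h" by simp
  have "isCont (cdf (distr M borel h)) t"
    using cont by (simp add: cdf_of_eq_cdf_distr continuous_on_eq_continuous_at)
  then have "measure (distr M borel h) {t} = 0"
    by (simp add: D.isCont_cdf)
  then have "prob {z \<in> space M. h z = t} = 0"
    by (simp add: measure_distr vimage_def Int_def conj_commute)
  then show ?thesis
    by (subst (asm) prob_eq_0) auto
qed

lemma integral_sgn_continuous_cdf_of:
  assumes [measurable]: "h \<in> borel_measurable M" and cont: "continuous_on UNIV (cdf_of M h)"
  shows "(\<integral>z. sgn (t - h z) \<partial>M) = 2 * cdf_of M h t - 1"
proof -
  have [measurable]: "{z \<in> space M. h z \<le> t} \<in> events" by measurable
  have "AE z in M. sgn (t - h z) = 2 * indicator {z \<in> space M. h z \<le> t} z - 1"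
    using AE_neq_continuous_cdf_of[OF assms, of t] AE_space
    by eventually_elim (auto simp: indicator_def sgn_if)
  then have "(\<integral>z. sgn (t - h z) \<partial>M) = (\<integral>z. 2 * indicator {z \<in> space M. h z \<le> t} z - 1 \<partial>M)"
    by (rule integral_cong_AE[rotated 2]) auto
  also have "\<dots> = 2 * prob {z \<in> space M. h z \<le> t} - 1"
    by (subst Bochner_Integration.integral_diff)
      (auto simp: prob_space emeasure_finite less_top[symmetric])
  finally show ?thesis
    by (simp add: cdf_of_def)
qed

lemma distributed_continuous_cdf_of_uniform:
  assumes h[measurable]: "h \<in> borel_measurable M" and cont: "continuous_on UNIV (cdf_of M h)"
  shows "distributed M lborel (\<lambda>z. cdf_of M h (h z))
    (\<lambda>x. indicator {0..1} x / measure lborel {0..1::real})"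
proof (rule uniform_distrI_borel_atLeastAtMost)
  let ?F = "cdf_of M h"
  show "(\<lambda>z. ?F (h z)) \<in> borel_measurable M" by measurable
  fix t :: real
  assume "0 \<le> t" "t \<le> 1"
  consider "t = 1" | "t < 1" "{u. ?F u \<le> t} = {}" | "t < 1" "{u. ?F u \<le> t} \<noteq> {}"
    using \<open>t \<le> 1\<close> by fastforce
  then show "prob {z \<in> space M. ?F (h z) \<le> t} = (t - 0) / (1 - 0)"
  proof cases
    case 1
    then show ?thesis
      using cdf_of_le_one[of h] by (simp add: prob_space)
  next
    case 2
    have "t = 0"
    proof (rule ccontr)
      assume "t \<noteq> 0"
      with \<open>0 \<le> t\<close> have "\<forall>\<^sub>F u in at_bot. ?F u < t"
        by (intro order_tendstoD(2)[OF tendsto_cdf_of_at_bot]) auto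
      then obtain N where "?F N < t"
        by (auto simp: eventually_at_bot_linorder)
      with 2 show False
        by (metis empty_iff less_imp_le mem_Collect_eq)
    qed
    with 2 show ?thesis by auto
  next
    case 3
    have "\<forall>\<^sub>F u in at_top. t < ?F u"
      using \<open>t < 1\<close> by (intro order_tendstoD(1)[OF tendsto_cdf_of_at_top]) auto
    with 3 obtain s where "?F s = t" "{u. ?F u \<le> t} = {..s}"
      using continuous_mono_sublevel_eq_atMost[OF cont mono_cdf_of[OF h]] by blast
    then have "{z \<in> space M. ?F (h z) \<le> t} = {z \<in> space M. h z \<le> s}"
      by blast
    with \<open>?F s = t\<close> show ?thesis
      by (simp add: cdf_of_def)
  qed
qed simp

lemma
  assumes h[measurable]: "h \<in> borel_measurable M" and cont: "continuous_on UNIV (cdf_of M h)"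
  shows integral_continuous_cdf_of: "(\<integral>z. cdf_of M h (h z) \<partial>M) = 1/2"
    and cov_of_continuous_cdf_of_self:
      "cov_of M (\<lambda>z. cdf_of M h (h z)) (\<lambda>z. cdf_of M h (h z)) = 1/12"
proof -
  let ?U = "\<lambda>z. cdf_of M h (h z)"
  note uniform = distributed_continuous_cdf_of_uniform[OF assms]
  have "integrable M ?U"
    by (rule integrable_cdf_of_comp[OF h h])
  moreover have "integrable M (\<lambda>z. (?U z)\<^sup>2)"
    by (auto intro!: integrable_const_bound[where B=1]
        simp: cdf_of_nonneg cdf_of_le_one abs_le_iff power_le_one)
  moreover show mean: "expectation ?U = 1/2"
    using uniform_distributed_expectation[OF uniform] by simp
  ultimately have "expectation (\<lambda>z. (?U z)\<^sup>2) - (1/2)\<^sup>2 = 1/12"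
    using uniform_distributed_variance[OF uniform] variance_eq[of ?U] by (simp only: mean) simp
  then show "cov_of M ?U ?U = 1/12"
    by (simp add: cov_of_def power2_eq_square mean)
qed

lemma AE_pair_neq_continuous_cdf_of:
  assumes [measurable]: "h \<in> borel_measurable M" and cont: "continuous_on UNIV (cdf_of M h)"
  shows "AE p in M \<Otimes>\<^sub>M M. h (fst p) \<noteq> h (snd p)"
proof -
  have "AE y in M. h x \<noteq> h y" for x
    using AE_neq_continuous_cdf_of[OF assms, of "h x"] by (rule eventually_mono) auto
  then have iterated: "AE x in M. AE y in M. h x \<noteq> h y"
    by simp
  interpret pair_prob_space M M ..
  show ?thesis
    using iterated by (intro AE_pair_measure) auto
qed

lemma
  fixes a :: "'a \<Rightarrow> 'b::{banach, second_countable_topology}"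
  assumes "integrable M a"
  shows integrable_pair_fst: "integrable (M \<Otimes>\<^sub>M M) (\<lambda>p. a (fst p))"
    and integrable_pair_snd: "integrable (M \<Otimes>\<^sub>M M) (\<lambda>p. a (snd p))"
proof -
  have [measurable]: "a \<in> borel_measurable M"
    using assms by (rule borel_measurable_integrable)
  show fst: "integrable (M \<Otimes>\<^sub>M M) (\<lambda>p. a (fst p))"
    using assms integrable_distr_eq[of fst "M \<Otimes>\<^sub>M M" M a] by (simp add: distr_pair_fst)
  interpret pair_prob_space M M ..
  show "integrable (M \<Otimes>\<^sub>M M) (\<lambda>p. a (snd p))"
    using integrable_product_swap[OF fst] by (simp add: split_beta')
qed

lemma integral_pair_diff_mult_sgn_eq_cov:
  assumes h[measurable]: "h \<in> borel_measurable M" and cont: "continuous_on UNIV (cdf_of M h)"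
    and int_a: "integrable M a"
  shows "(\<integral>p. (a (fst p) - a (snd p)) * sgn (h (fst p) - h (snd p)) \<partial>(M \<Otimes>\<^sub>M M))
    = 4 * cov_of M a (\<lambda>z. cdf_of M h (h z))"
proof -
  have [measurable]: "a \<in> borel_measurable M"
    using int_a by (rule borel_measurable_integrable)
  interpret Q: pair_prob_space M M ..
  let ?F = "cdf_of M h"
  define s where "s p = sgn (h (fst p) - h (snd p))" for p
  have [measurable]: "s \<in> borel_measurable (M \<Otimes>\<^sub>M M)"
    unfolding s_def by measurable
  have s_swap: "s (snd p, fst p) = - s p" for p
    by (simp add: s_def sgn_if)
  have int_fst: "integrable (M \<Otimes>\<^sub>M M) (\<lambda>p. a (fst p) * s p)"
    by (rule Bochner_Integration.integrable_bound[OF integrable_pair_fst[OF int_a]])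
      (auto simp: s_def sgn_if abs_mult)
  have int_snd: "integrable (M \<Otimes>\<^sub>M M) (\<lambda>p. a (snd p) * s p)"
    using Q.integrable_product_swap[OF int_fst] by (simp add: split_beta' s_swap)
  have antisym: "(\<integral>p. a (snd p) * s p \<partial>(M \<Otimes>\<^sub>M M)) = - (\<integral>p. a (fst p) * s p \<partial>(M \<Otimes>\<^sub>M M))"
    using Q.integral_product_swap[of "\<lambda>p. a (fst p) * s p"] by (simp add: split_beta' s_swap)
  have int_aF: "integrable M (\<lambda>x. a x * ?F (h x))"
    by (rule Bochner_Integration.integrable_bound[OF int_a])
      (auto simp: abs_mult cdf_of_nonneg cdf_of_le_one intro!: mult_left_le)
  have "(\<integral>p. a (fst p) * s p \<partial>(M \<Otimes>\<^sub>M M)) = (\<integral>x. (\<integral>y. a x * s (x, y) \<partial>M) \<partial>M)"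
    using Q.integral_fst'[OF int_fst] by simp
  also have "\<dots> = (\<integral>x. 2 * (a x * ?F (h x)) - a x \<partial>M)"
    by (rule Bochner_Integration.integral_cong)
      (auto simp: s_def integral_sgn_continuous_cdf_of[OF h cont] algebra_simps)
  also have "\<dots> = 2 * (\<integral>x. a x * ?F (h x) \<partial>M) - (\<integral>x. a x \<partial>M)"
    using int_aF int_a by simp
  finally have "(\<integral>p. a (fst p) * s p \<partial>(M \<Otimes>\<^sub>M M))
    = 2 * (\<integral>x. a x * ?F (h x) \<partial>M) - (\<integral>x. a x \<partial>M)" .
  moreover have "(\<integral>p. (a (fst p) - a (snd p)) * s p \<partial>(M \<Otimes>\<^sub>M M))
    = (\<integral>p. a (fst p) * s p \<partial>(M \<Otimes>\<^sub>M M)) - (\<integral>p. a (snd p) * s p \<partial>(M \<Otimes>\<^sub>M M))"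
    using int_fst int_snd by (simp add: left_diff_distrib)
  ultimately show ?thesis
    unfolding s_def[symmetric]
    by (simp add: antisym cov_of_def integral_continuous_cdf_of[OF h cont])
qed

lemma integral_pair_discordant_eq_kendall:
  assumes a[measurable]: "a \<in> borel_measurable M" and cont_a: "continuous_on UNIV (cdf_of M a)"
    and h[measurable]: "h \<in> borel_measurable M" and cont_h: "continuous_on UNIV (cdf_of M h)"
  shows "(\<integral>p. of_bool ((a (fst p) - a (snd p)) * sgn (h (fst p) - h (snd p)) \<le> 0) \<partial>(M \<Otimes>\<^sub>M M))
    = (1 - (\<integral>p. sgn (a (fst p) - a (snd p)) * sgn (h (fst p) - h (snd p)) \<partial>(M \<Otimes>\<^sub>M M))) / 2"
proof -
  interpret Q: pair_prob_space M M ..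
  have "AE p in M \<Otimes>\<^sub>M M. of_bool ((a (fst p) - a (snd p)) * sgn (h (fst p) - h (snd p)) \<le> 0)
    = (1 - sgn (a (fst p) - a (snd p)) * sgn (h (fst p) - h (snd p))) / (2::real)"
    using AE_pair_neq_continuous_cdf_of[OF a cont_a] AE_pair_neq_continuous_cdf_of[OF h cont_h]
    by eventually_elim (simp add: of_bool_discordant_eq_sgn abs_sgn_eq)
  then have "(\<integral>p. of_bool ((a (fst p) - a (snd p)) * sgn (h (fst p) - h (snd p)) \<le> 0) \<partial>(M \<Otimes>\<^sub>M M))
    = (\<integral>p. (1 - sgn (a (fst p) - a (snd p)) * sgn (h (fst p) - h (snd p))) / 2 \<partial>(M \<Otimes>\<^sub>M M))"
    by (rule integral_cong_AE[rotated 2]) auto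
  also have "\<dots> = (1 - (\<integral>p. sgn (a (fst p) - a (snd p)) * sgn (h (fst p) - h (snd p)) \<partial>(M \<Otimes>\<^sub>M M))) / 2"
    by (subst integral_divide_zero, subst Bochner_Integration.integral_diff)
      (auto simp: Q.P.prob_space intro!: Q.P.integrable_const_bound[where B=1] simp: abs_mult abs_sgn_eq)
  finally show ?thesis .
qed

lemma integral_pair_weighted_discordant_eq_cov:
  assumes h[measurable]: "h \<in> borel_measurable M" and cont: "continuous_on UNIV (cdf_of M h)"
    and int_a: "integrable M a"
  shows "(\<integral>p. \<bar>a (fst p) - a (snd p)\<bar> * of_bool ((a (fst p) - a (snd p)) * sgn (h (fst p) - h (snd p)) \<le> 0)
      \<partial>(M \<Otimes>\<^sub>M M))
    = (\<integral>p. \<bar>a (fst p) - a (snd p)\<bar> \<partial>(M \<Otimes>\<^sub>M M)) / 2 - 2 * cov_of M a (\<lambda>z. cdf_of M h (h z))"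
proof -
  have [measurable]: "a \<in> borel_measurable M"
    using int_a by (rule borel_measurable_integrable)
  interpret Q: pair_prob_space M M ..
  define d where "d p = a (fst p) - a (snd p)" for p
  define s where "s p = sgn (h (fst p) - h (snd p))" for p
  have [measurable]: "d \<in> borel_measurable (M \<Otimes>\<^sub>M M)" "s \<in> borel_measurable (M \<Otimes>\<^sub>M M)"
    unfolding d_def s_def by measurable
  have int_d: "integrable (M \<Otimes>\<^sub>M M) d"
    unfolding d_def using integrable_pair_fst[OF int_a] integrable_pair_snd[OF int_a] by simp
  have int_ds: "integrable (M \<Otimes>\<^sub>M M) (\<lambda>p. d p * s p)"
    by (rule Bochner_Integration.integrable_bound[OF integrable_abs[OF int_d]])
      (auto simp: s_def sgn_if abs_mult)
  have "AE p in M \<Otimes>\<^sub>M M. \<bar>d p\<bar> * of_bool (d p * s p \<le> 0) = (\<bar>d p\<bar> - d p * s p) / 2"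
    using AE_pair_neq_continuous_cdf_of[OF h cont]
    by eventually_elim (simp add: s_def abs_mult_of_bool_discordant abs_sgn_eq)
  then have "(\<integral>p. \<bar>d p\<bar> * of_bool (d p * s p \<le> 0) \<partial>(M \<Otimes>\<^sub>M M))
    = (\<integral>p. (\<bar>d p\<bar> - d p * s p) / 2 \<partial>(M \<Otimes>\<^sub>M M))"
    by (rule integral_cong_AE[rotated 2]) auto
  also have "\<dots> = (\<integral>p. \<bar>d p\<bar> \<partial>(M \<Otimes>\<^sub>M M)) / 2 - (\<integral>p. d p * s p \<partial>(M \<Otimes>\<^sub>M M)) / 2"
    using int_d int_ds by (simp add: diff_divide_distrib)
  finally show ?thesis
    unfolding d_def s_def
    by (simp add: integral_pair_diff_mult_sgn_eq_cov[OF h cont int_a])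
qed

lemma integral_pair_abs_diff_continuous_cdf_of:
  assumes h[measurable]: "h \<in> borel_measurable M" and cont: "continuous_on UNIV (cdf_of M h)"
  shows "(\<integral>p. \<bar>cdf_of M h (h (fst p)) - cdf_of M h (h (snd p))\<bar> \<partial>(M \<Otimes>\<^sub>M M)) = 1/3"
proof -
  let ?U = "\<lambda>z. cdf_of M h (h z)"
  have "(\<integral>p. \<bar>?U (fst p) - ?U (snd p)\<bar> \<partial>(M \<Otimes>\<^sub>M M))
    = (\<integral>p. (?U (fst p) - ?U (snd p)) * sgn (h (fst p) - h (snd p)) \<partial>(M \<Otimes>\<^sub>M M))"
    by (simp add: abs_diff_mono_eq_mult_sgn[OF mono_cdf_of[OF h]])
  also have "\<dots> = 4 * cov_of M ?U ?U"
    using integral_pair_diff_mult_sgn_eq_cov[OF h cont integrable_cdf_of_comp[OF h h]] by simp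
  finally show ?thesis
    by (simp add: cov_of_continuous_cdf_of_self[OF h cont])
qed

lemma integral_pair_cdf_weighted_discordant_eq_spearman:
  assumes y[measurable]: "y \<in> borel_measurable M" and cont_y: "continuous_on UNIV (cdf_of M y)"
    and h[measurable]: "h \<in> borel_measurable M" and cont_h: "continuous_on UNIV (cdf_of M h)"
  shows "(\<integral>p. \<bar>cdf_of M y (y (fst p)) - cdf_of M y (y (snd p))\<bar>
        * of_bool ((y (fst p) - y (snd p)) * sgn (h (fst p) - h (snd p)) \<le> 0) \<partial>(M \<Otimes>\<^sub>M M))
    = (1 - 12 * cov_of M (\<lambda>z. cdf_of M y (y z)) (\<lambda>z. cdf_of M h (h z))) / 6"
  using integral_pair_weighted_discordant_eq_cov[OF h cont_h integrable_cdf_of_comp[OF y y]]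
    integral_pair_abs_diff_continuous_cdf_of[OF y cont_y]
  by (simp add: abs_mult_of_bool_discordant_mono[OF mono_cdf_of[OF y]])

end

theorem theorem1:
  fixes S :: "'x measure" and P :: "('x \<times> real) measure" and g :: "'x \<Rightarrow> real"
  assumes "prob_space P"
    and "sets P = sets (S \<Otimes>\<^sub>M borel)"
    and "integrable P snd"
    and "continuous_on UNIV (cdf_of P snd)"
    and "g \<in> borel_measurable S"
    and "continuous_on UNIV (cdf_of P (\<lambda>z. g (fst z)))"
  shows "rank_loss P (\<lambda>y y'. 1) g = (1 - kendall_tau P g) / 2
    \<and> rank_loss P (\<lambda>y y'. \<bar>y - y'\<bar>) g =
           (\<integral>p. \<bar>snd (fst p) - snd (snd p)\<bar> \<partial>(P \<Otimes>\<^sub>M P)) / 2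
           - 2 * cov_of P snd (\<lambda>z. cdf_of P (\<lambda>u. g (fst u)) (g (fst z)))
    \<and> rank_loss P (\<lambda>y y'. \<bar>cdf_of P snd y - cdf_of P snd y'\<bar>) g = (1 - spearman_rho P g) / 6"
proof -
  interpret prob_space P by fact
  let ?G = "\<lambda>z. g (fst z)" and ?F = "cdf_of P snd"
  note [measurable] = assms(5)
  have sets_P: "measurable P = measurable (S \<Otimes>\<^sub>M borel)"
    by (intro ext measurable_cong_sets[OF assms(2) refl])
  have Y[measurable]: "snd \<in> borel_measurable P"
    unfolding sets_P by measurable
  have G[measurable]: "?G \<in> borel_measurable P"
    unfolding sets_P by measurable
  have kendall: "rank_loss P (\<lambda>y y'. 1) g = (1 - kendall_tau P g) / 2"
    using integral_pair_discordant_eq_kendall[OF Y assms(4) G assms(6)]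
    by (simp add: rank_loss_def kendall_tau_def indicator_def)
  have gini: "rank_loss P (\<lambda>y y'. \<bar>y - y'\<bar>) g =
           (\<integral>p. \<bar>snd (fst p) - snd (snd p)\<bar> \<partial>(P \<Otimes>\<^sub>M P)) / 2
           - 2 * cov_of P snd (\<lambda>z. cdf_of P (\<lambda>u. g (fst u)) (g (fst z)))"
    using integral_pair_weighted_discordant_eq_cov[OF G assms(6) assms(3)]
    by (simp add: rank_loss_def indicator_def)
  have spearman: "rank_loss P (\<lambda>y y'. \<bar>?F y - ?F y'\<bar>) g = (1 - spearman_rho P g) / 6"
    using integral_pair_cdf_weighted_discordant_eq_spearman[OF Y assms(4) G assms(6)]
    by (simp add: rank_loss_def spearman_rho_def indicator_def)
  from kendall gini spearman show ?thesis
    by blast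
qed

end
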